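(* Let $d=d_1+\dots+d_l$, ${\bf L}=\mathrm{Diag}({\bf L}_1,\dots,{\bf L}_l)$ with ${\bf L}_i\in\mathbb{S}^{d_i}_{++}$, and $q_1,\dots,q_l\in(0,1]$. Let ${\bf T}=\mathrm{Diag}({\bf T}_1,\dots,{\bf T}_l)$ with ${\bf T}_i=\frac{\eta_i}{q_i}{\bf I}_{d_i}$, $\eta_i\sim\mathrm{Bernoulli}(q_i)$. Let ${\bf D}:=(\mathbb{E}[{\bf T}{\bf L}{\bf T}])^{-1}$ (the optimal stepsize for det-CGD2), and for a constant $C_0>0$ (standing for $2(f(x^0)-f^{\inf})/\varepsilon^2$) define the communication complexity $\mathcal{C}(q):=\big(\sum_{i=1}^lq_id_i\big)\cdot\frac{C_0}{\det({\bf D})^{1/d}}$. Then $$\mathcal C(q)=C_0\Big(\sum_{i=1}^lq_id_i\Big)\prod_{i=1}^l\Big(\frac1{q_i}\Big)^{d_i/d}\det({\bf L})^{1/d}.$$ Moreover, $\mathcal C$ is minimized over $q\in(0,1]^l$ when all $q_i$ are equal, and the minimum value is $C_0\, d\,\det({\bf L})^{1/d}$.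
   Context: $\mathrm{Diag}(\cdot)$ denotes a block-diagonal matrix; $\mathbb{S}^{m}_{++}$: symmetric positive definite $m\times m$ matrices. Motivation: for det-CGD2, $x^{k+1}=x^k-{\bf T}^k{\bf D}\nabla f(x^k)$ with i.i.d. unbiased sketches ${\bf T}^k$, reaching $\frac1K\sum_k\mathbb{E}\|\nabla f(x^k)\|^2_{{\bf D}/\det({\bf D})^{1/d}}\le\varepsilon^2$ takes $K\ge 2(f(x^0)-f^{\inf})/(\varepsilon^2\det({\bf D})^{1/d})$ iterations, each sending $\sum_iq_id_i$ coordinates in expectation; $\mathcal C(q)$ is the product. *)

theory Defs
  imports "HOL-Analysis.Analysis" "HOL-Probability.Probability"
begin

text \<open>Coordinates of R^d are indexed by the finite type 'n; blocks by the finite type 'k.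
  The map b assigns each coordinate to its block, so block i has dimension
  d_i = card {j. b j = i}.\<close>

definition blk_dim :: "('n::finite \<Rightarrow> 'k::finite) \<Rightarrow> 'k \<Rightarrow> nat" where
  "blk_dim b i = card {j. b j = i}"

definition block_diag :: "('n::finite \<Rightarrow> 'k::finite) \<Rightarrow> real^'n^'n \<Rightarrow> bool" where
  "block_diag b L \<longleftrightarrow> (\<forall>j k. b j \<noteq> b k \<longrightarrow> L $ j $ k = 0)"

definition block_pd :: "('n::finite \<Rightarrow> 'k::finite) \<Rightarrow> real^'n^'n \<Rightarrow> 'k \<Rightarrow> bool" where
  "block_pd b L i \<longleftrightarrow>
     (\<forall>j k. b j = i \<longrightarrow> b k = i \<longrightarrow> L $ j $ k = L $ k $ j) \<and>
     (\<forall>x::real^'n. (\<forall>j. b j \<noteq> i \<longrightarrow> x $ j = 0) \<longrightarrow> x \<noteq> 0 \<longrightarrow> x \<bullet> (L *v x) > 0)"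

definition sketch :: "('n::finite \<Rightarrow> 'k::finite) \<Rightarrow> ('k \<Rightarrow> real) \<Rightarrow> ('k \<Rightarrow> bool) \<Rightarrow> real^'n^'n" where
  "sketch b q \<eta> = (\<chi> j k. if j = k then (if \<eta> (b j) then 1 / q (b j) else 0) else 0)"

definition eta_law :: "('k::finite \<Rightarrow> real) \<Rightarrow> ('k \<Rightarrow> bool) pmf" where
  "eta_law q = Pi_pmf UNIV False (\<lambda>i. bernoulli_pmf (q i))"

definition ETLT :: "('n::finite \<Rightarrow> 'k::finite) \<Rightarrow> ('k \<Rightarrow> real) \<Rightarrow> real^'n^'n \<Rightarrow> real^'n^'n" where
  "ETLT b q L = (\<chi> j k. measure_pmf.expectation (eta_law q)
      (\<lambda>\<eta>. (sketch b q \<eta> ** L ** sketch b q \<eta>) $ j $ k))"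

definition stepD :: "('n::finite \<Rightarrow> 'k::finite) \<Rightarrow> ('k \<Rightarrow> real) \<Rightarrow> real^'n^'n \<Rightarrow> real^'n^'n" where
  "stepD b q L = matrix_inv (ETLT b q L)"

definition comm_cx :: "real \<Rightarrow> ('n::finite \<Rightarrow> 'k::finite) \<Rightarrow> real^'n^'n \<Rightarrow> ('k \<Rightarrow> real) \<Rightarrow> real" where
  "comm_cx C0 b L q = (\<Sum>i\<in>UNIV. q i * real (blk_dim b i)) *
      (C0 / (det (stepD b q L) powr (1 / real CARD('n))))"

end

theory Submission
  imports Defs
begin

text \<open>Because E[eta_i^2] = q_i and L vanishes off its diagonal blocks, E[T L T] is L with
  its i-th block row scaled by 1/q_i. Hence det D = (prod_i q_i^d_i) / det L and
  C(q) = C0 det(L)^(1/d) (sum_i q_i d_i) / prod_i q_i^(d_i/d). The weighted AM-GM inequality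
  with weights d_i/d bounds the denominator by (sum_i q_i d_i) / d, with equality for constant q.
  Finally det L > 0: on the segment from L to the identity every matrix is positive definite,
  hence nonsingular, so the determinant cannot change sign.\<close>

definition diag_mat :: "('n::finite \<Rightarrow> 'a::semiring_1) \<Rightarrow> 'a^'n^'n" where
  "diag_mat f = (\<chi> j k. if j = k then f j else 0)"

lemma diag_mat_mult_nth: "(diag_mat f ** A) $ j $ k = f j * A $ j $ k"
  by (simp add: diag_mat_def matrix_matrix_mult_def mult_delta_left)

lemma mult_diag_mat_nth: "(A ** diag_mat f) $ j $ k = A $ j $ k * f k"
  by (simp add: diag_mat_def matrix_matrix_mult_def mult_delta_right)

lemma det_diag_mat: "det (diag_mat f :: 'a::comm_ring_1^'n::finite^'n) = (\<Prod>j\<in>UNIV. f j)"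
  unfolding diag_mat_def by (subst det_diagonal) auto

lemma inner_matrix_vector_mult_eq_sum:
  "x \<bullet> (A *v x) = (\<Sum>j\<in>UNIV. \<Sum>k\<in>UNIV. x $ j * A $ j $ k * x $ k)"
  for x :: "real^'n::finite"
  by (simp add: inner_vec_def matrix_vector_mult_def sum_distrib_left mult.assoc)

lemma quadratic_form_block_diag:
  fixes b :: "'n::finite \<Rightarrow> 'k::finite" and L :: "real^'n^'n"
  assumes L_diag: "block_diag b L"
  shows "x \<bullet> (L *v x) = (\<Sum>i\<in>UNIV. (\<chi> j. if b j = i then x $ j else 0) \<bullet>
           (L *v (\<chi> j. if b j = i then x $ j else 0)))"
proof -
  have "(\<Sum>i\<in>UNIV. (\<chi> j. if b j = i then x $ j else 0) \<bullet>
          (L *v (\<chi> j. if b j = i then x $ j else 0)))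
      = (\<Sum>i\<in>UNIV. \<Sum>j\<in>UNIV. \<Sum>k\<in>UNIV.
          if b j = i \<and> b k = i then x $ j * L $ j $ k * x $ k else 0)"
    unfolding inner_matrix_vector_mult_eq_sum by (intro sum.cong refl) simp
  also have "\<dots> = (\<Sum>j\<in>UNIV. \<Sum>k\<in>UNIV. \<Sum>i\<in>UNIV.
      if b j = i \<and> b k = i then x $ j * L $ j $ k * x $ k else 0)"
    by (subst sum.swap, rule sum.cong[OF refl], rule sum.swap)
  also have "\<dots> = (\<Sum>j\<in>UNIV. \<Sum>k\<in>UNIV. x $ j * L $ j $ k * x $ k)"
  proof (intro sum.cong refl)
    fix j k
    show "(\<Sum>i\<in>UNIV. if b j = i \<and> b k = i then x $ j * L $ j $ k * x $ k else 0)
        = x $ j * L $ j $ k * x $ k"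
      using L_diag[unfolded block_diag_def, rule_format, of j k]
      by (cases "b j = b k") (auto intro: sum.neutral)
  qed
  finally show ?thesis
    unfolding inner_matrix_vector_mult_eq_sum ..
qed

lemma pos_definite_if_block_pd:
  fixes b :: "'n::finite \<Rightarrow> 'k::finite" and L :: "real^'n^'n"
  assumes L_diag: "block_diag b L" and L_pd: "\<And>i. block_pd b L i" and "x \<noteq> 0"
  shows "x \<bullet> (L *v x) > 0"
proof -
  define x_block where "x_block i = (\<chi> j. if b j = i then x $ j else 0)" for i
  have "\<forall>j. b j \<noteq> i \<longrightarrow> x_block i $ j = 0" for i
    by (simp add: x_block_def)
  then have x_block_pos: "x_block i \<bullet> (L *v x_block i) > 0" if "x_block i \<noteq> 0" for i
    using L_pd[of i] that unfolding block_pd_def by blast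
  have x_block_nonneg: "x_block i \<bullet> (L *v x_block i) \<ge> 0" for i
    using x_block_pos[of i] by (cases "x_block i = 0") auto
  obtain j0 where "x $ j0 \<noteq> 0"
    using \<open>x \<noteq> 0\<close> by (metis vec_eq_iff zero_index)
  then have "x_block (b j0) $ j0 \<noteq> 0"
    by (simp add: x_block_def)
  then have "x_block (b j0) \<noteq> 0"
    by auto
  then have "(\<Sum>i\<in>UNIV. x_block i \<bullet> (L *v x_block i)) > 0"
    by (intro sum_pos2[of UNIV "b j0"]) (auto intro: x_block_pos x_block_nonneg)
  also have "(\<Sum>i\<in>UNIV. x_block i \<bullet> (L *v x_block i)) = x \<bullet> (L *v x)"
    unfolding x_block_def by (rule quadratic_form_block_diag[OF L_diag, symmetric])
  finally show ?thesis .
qed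

lemma det_nonzero_if_pos_definite:
  fixes A :: "real^'n::finite^'n"
  assumes pd: "\<And>x. x \<noteq> 0 \<Longrightarrow> x \<bullet> (A *v x) > 0"
  shows "det A \<noteq> 0"
proof -
  have "x = 0" if "A *v x = 0" for x
    using pd[of x] that by force
  then have "invertible A"
    using invertible_left_inverse matrix_left_invertible_ker by blast
  then show ?thesis
    using invertible_det_nz by blast
qed

lemma det_pos_if_pos_definite:
  fixes A :: "real^'n::finite^'n"
  assumes pd: "\<And>x. x \<noteq> 0 \<Longrightarrow> x \<bullet> (A *v x) > 0"
  shows "det A > 0"
proof (rule ccontr)
  assume "\<not> det A > 0"
  define M where "M t = t *\<^sub>R mat 1 + (1 - t) *\<^sub>R A" for t :: real
  have "isCont (\<lambda>t. det (M t)) t" for t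
    unfolding M_def det_def by (intro continuous_intros)
  moreover have "det (M 0) \<le> 0" "0 \<le> det (M 1)"
    using \<open>\<not> det A > 0\<close> by (simp_all add: M_def)
  ultimately obtain t where t: "0 \<le> t" "t \<le> 1" "det (M t) = 0"
    using IVT[of "\<lambda>t. det (M t)" 0 0 1] by auto
  have "det (M t) \<noteq> 0"
  proof (rule det_nonzero_if_pos_definite)
    fix x :: "real^'n"
    assume "x \<noteq> 0"
    have "x \<bullet> (M t *v x) = t * (x \<bullet> x) + (1 - t) * (x \<bullet> (A *v x))"
      by (simp add: M_def matrix_vector_mult_add_rdistrib inner_add_right
          flip: scaleR_matrix_vector_assoc)
    also have "\<dots> > 0"
    proof (cases "t = 1")
      case False
      then have "(1 - t) * (x \<bullet> (A *v x)) > 0"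
        using t pd[OF \<open>x \<noteq> 0\<close>] by simp
      moreover have "t * (x \<bullet> x) \<ge> 0"
        using t by simp
      ultimately show ?thesis by linarith
    qed (use \<open>x \<noteq> 0\<close> in simp)
    finally show "x \<bullet> (M t *v x) > 0" .
  qed
  with t show False by simp
qed

lemma det_matrix_inv:
  fixes A :: "real^'n::finite^'n"
  assumes "det A \<noteq> 0"
  shows "det (matrix_inv A) = inverse (det A)"
proof -
  have "invertible A"
    using assms invertible_det_nz by blast
  then have "A ** matrix_inv A = mat 1"
    unfolding invertible_def matrix_inv_def by (rule someI2_ex) blast
  then have "det A * det (matrix_inv A) = 1"
    by (metis det_I det_mul)
  then show ?thesis
    by (simp add: inverse_unique)
qed

lemma weighted_geometric_mean_le_arithmetic_mean:
  fixes x w :: "'a \<Rightarrow> real"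
  assumes "finite A" and x: "\<And>i. i \<in> A \<Longrightarrow> x i > 0"
    and w: "\<And>i. i \<in> A \<Longrightarrow> w i \<ge> 0" and w_sum: "(\<Sum>i\<in>A. w i) = 1"
  shows "(\<Prod>i\<in>A. x i powr w i) \<le> (\<Sum>i\<in>A. w i * x i)"
proof -
  have "(\<Prod>i\<in>A. x i powr w i) = (\<Prod>i\<in>A. exp (w i * ln (x i)))"
    by (intro prod.cong refl)
      (simp add: x[THEN less_imp_neq, THEN not_sym] powr_def mult.commute)
  also have "\<dots> = exp (\<Sum>i\<in>A. w i *\<^sub>R ln (x i))"
    using \<open>finite A\<close> by (simp add: exp_sum)
  also have "\<dots> \<le> (\<Sum>i\<in>A. w i * exp (ln (x i)))"
    using \<open>finite A\<close> w_sum w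
    by (intro convex_on_sum[where C = UNIV]) (auto simp: exp_convex)
  also have "\<dots> = (\<Sum>i\<in>A. w i * x i)"
    using x by simp
  finally show ?thesis .
qed

lemma weighted_sum_mul_prod_inverse_powr_ge:
  fixes q d :: "'a \<Rightarrow> real"
  assumes "finite A" and q: "\<And>i. i \<in> A \<Longrightarrow> q i > 0"
    and d: "\<And>i. i \<in> A \<Longrightarrow> d i \<ge> 0" and s: "(\<Sum>i\<in>A. d i) > 0"
  shows "(\<Sum>i\<in>A. d i) \<le>
    (\<Sum>i\<in>A. q i * d i) * (\<Prod>i\<in>A. (1 / q i) powr (d i / (\<Sum>i\<in>A. d i)))"
proof -
  define s where "s = (\<Sum>i\<in>A. d i)"
  define G where "G = (\<Prod>i\<in>A. q i powr (d i / s))"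
  have G_pos: "G > 0"
    unfolding G_def by (intro prod_pos) (simp add: q[THEN less_imp_neq, THEN not_sym])
  have "G \<le> (\<Sum>i\<in>A. d i / s * q i)"
    unfolding G_def using \<open>finite A\<close> q d s
    by (intro weighted_geometric_mean_le_arithmetic_mean)
      (auto simp: s_def simp flip: sum_divide_distrib)
  also have "\<dots> = (\<Sum>i\<in>A. q i * d i) / s"
    by (simp add: sum_divide_distrib mult.commute)
  finally have "s \<le> (\<Sum>i\<in>A. q i * d i) / G"
    using G_pos s by (simp add: s_def field_simps)
  moreover have "(\<Prod>i\<in>A. (1 / q i) powr (d i / s)) = 1 / G"
    unfolding G_def using q by (simp add: powr_divide prod_dividef less_imp_le)
  ultimately show ?thesis
    by (simp add: s_def)
qed

lemma weighted_sum_mul_prod_inverse_powr_const: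
  fixes d :: "'a \<Rightarrow> real"
  assumes "c > 0" and "(\<Sum>i\<in>A. d i) \<noteq> 0"
  shows "(\<Sum>i\<in>A. c * d i) * (\<Prod>i\<in>A. (1 / c) powr (d i / (\<Sum>i\<in>A. d i)))
    = (\<Sum>i\<in>A. d i)"
proof -
  have "(\<Prod>i\<in>A. (1 / c) powr (d i / (\<Sum>i\<in>A. d i)))
      = (1 / c) powr (\<Sum>i\<in>A. d i / (\<Sum>i\<in>A. d i))"
    using \<open>c > 0\<close> by (simp add: powr_sum)
  also have "\<dots> = 1 / c"
    using assms by (simp flip: sum_divide_distrib)
  finally show ?thesis
    using \<open>c > 0\<close> by (simp flip: sum_distrib_left)
qed

lemma sum_blk_dim: "(\<Sum>i\<in>UNIV. blk_dim b i) = CARD('n)"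
  for b :: "'n::finite \<Rightarrow> 'k::finite"
  unfolding blk_dim_def using sum.group[of UNIV UNIV b "\<lambda>_. 1 :: nat"] by simp

lemma prod_blk_dim: "(\<Prod>j\<in>UNIV. f (b j)) = (\<Prod>i\<in>UNIV. f i ^ blk_dim b i)"
  for b :: "'n::finite \<Rightarrow> 'k::finite" and f :: "'k \<Rightarrow> 'a::comm_monoid_mult"
proof -
  have "(\<Prod>j\<in>UNIV. f (b j)) = (\<Prod>i\<in>UNIV. \<Prod>j\<in>{j. b j = i}. f (b j))"
    using prod.group[of UNIV UNIV b "\<lambda>j. f (b j)"] by simp
  also have "\<dots> = (\<Prod>i\<in>UNIV. f i ^ blk_dim b i)"
    unfolding blk_dim_def by (intro prod.cong refl) simp
  finally show ?thesis .
qed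

lemma sketch_eq_diag_mat: "sketch b q \<eta> = diag_mat (\<lambda>j. if \<eta> (b j) then 1 / q (b j) else 0)"
  unfolding sketch_def diag_mat_def ..

lemma sketch_mult_mult_sketch_nth:
  "(sketch b q \<eta> ** L ** sketch b q \<eta>) $ j $ k =
     (if \<eta> (b j) then 1 / q (b j) else 0) * L $ j $ k * (if \<eta> (b k) then 1 / q (b k) else 0)"
  unfolding sketch_eq_diag_mat mult_diag_mat_nth diag_mat_mult_nth ..

lemma eta_law_component: "map_pmf (\<lambda>\<eta>. \<eta> i) (eta_law q) = bernoulli_pmf (q i)"
  unfolding eta_law_def by (subst Pi_pmf_component) auto

lemma ETLT_eq_diag_mat_mult:
  fixes b :: "'n::finite \<Rightarrow> 'k::finite"
  assumes L_diag: "block_diag b L" and q: "\<And>i. 0 \<le> q i \<and> q i \<le> 1"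
  shows "ETLT b q L = diag_mat (\<lambda>j. 1 / q (b j)) ** L"
proof -
  \<comment> \<open>For \<open>q i = 0\<close> both sides vanish, the right one because \<open>x / 0 = 0\<close>.\<close>
  have "measure_pmf.expectation (eta_law q) (\<lambda>\<eta>. (sketch b q \<eta> ** L ** sketch b q \<eta>) $ j $ k)
      = L $ j $ k / q (b j)" for j k
  proof (cases "b j = b k")
    case True
    have "measure_pmf.expectation (eta_law q) (\<lambda>\<eta>. (sketch b q \<eta> ** L ** sketch b q \<eta>) $ j $ k)
        = measure_pmf.expectation (map_pmf (\<lambda>\<eta>. \<eta> (b j)) (eta_law q))
            (\<lambda>x. (if x then 1 / q (b j) else 0) * L $ j $ k * (if x then 1 / q (b j) else 0))"
      by (simp only: sketch_mult_mult_sketch_nth integral_map_pmf True)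
    also have "\<dots> = L $ j $ k / q (b j)"
      unfolding eta_law_component using q[of "b j"] by (simp add: power2_eq_square)
    finally show ?thesis .
  next
    case False
    with L_diag have "L $ j $ k = 0" unfolding block_diag_def by blast
    then show ?thesis by (simp add: sketch_mult_mult_sketch_nth)
  qed
  then show ?thesis
    unfolding ETLT_def by (simp add: vec_eq_iff diag_mat_mult_nth)
qed

lemma det_stepD:
  fixes b :: "'n::finite \<Rightarrow> 'k::finite" and L :: "real^'n^'n"
  assumes L_diag: "block_diag b L" and "det L \<noteq> 0" and q: "\<And>i. 0 < q i \<and> q i \<le> 1"
  shows "det (stepD b q L) = (\<Prod>i\<in>UNIV. q i ^ blk_dim b i) / det L"
proof -
  have q01: "0 \<le> q i \<and> q i \<le> 1" for i
    using q[of i] by simp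
  have "det (ETLT b q L) = (\<Prod>i\<in>UNIV. (1 / q i) ^ blk_dim b i) * det L"
    by (simp add: ETLT_eq_diag_mat_mult[OF L_diag q01] det_mul det_diag_mat
        prod_blk_dim[of "\<lambda>i. 1 / q i"])
  also have "\<dots> = det L / (\<Prod>i\<in>UNIV. q i ^ blk_dim b i)"
    by (simp add: power_one_over prod_dividef)
  finally show ?thesis
    using \<open>det L \<noteq> 0\<close> q unfolding stepD_def
    by (simp add: det_matrix_inv prod_pos less_imp_neq[symmetric])
qed

lemma comm_cx_eq:
  fixes b :: "'n::finite \<Rightarrow> 'k::finite" and L :: "real^'n^'n"
  assumes L_diag: "block_diag b L" and dL: "det L > 0" and q: "\<And>i. 0 < q i \<and> q i \<le> 1"
  shows "comm_cx C0 b L q =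
           C0 * (\<Sum>i\<in>UNIV. q i * real (blk_dim b i))
              * (\<Prod>i\<in>UNIV. (1 / q i) powr (real (blk_dim b i) / real CARD('n)))
              * det L powr (1 / real CARD('n))"
proof -
  define n where "n = real CARD('n)"
  define G where "G = (\<Prod>i\<in>UNIV. q i powr (real (blk_dim b i) / n))"
  have G_pos: "G > 0"
    unfolding G_def
    by (intro prod_pos) (simp add: q[THEN conjunct1, THEN less_imp_neq, THEN not_sym])
  have "(\<Prod>i\<in>UNIV. q i ^ blk_dim b i) powr (1 / n) = G"
    unfolding G_def prod_powr_distrib
    using q by (intro prod.cong refl) (simp add: powr_realpow [symmetric] powr_powr)
  then have "det (stepD b q L) powr (1 / n) = G / det L powr (1 / n)"
    using q dL by (simp add: det_stepD[OF L_diag] powr_divide prod_nonneg less_imp_le)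
  moreover have "(\<Prod>i\<in>UNIV. (1 / q i) powr (real (blk_dim b i) / n)) = 1 / G"
    unfolding G_def using q by (simp add: powr_divide prod_dividef less_imp_le)
  ultimately show ?thesis
    using G_pos unfolding comm_cx_def n_def [symmetric] by simp
qed

theorem corollary2:
  fixes b :: "'n::finite \<Rightarrow> 'k::finite"
    and L :: "real^'n^'n"
    and q :: "'k \<Rightarrow> real"
    and C0 :: real
  assumes blocks_nonempty: "surj b"
    and L_diag: "block_diag b L"
    and L_pd: "\<And>i. block_pd b L i"
    and q_range: "\<And>i. 0 < q i \<and> q i \<le> 1"
    and C0_pos: "C0 > 0"
  shows "(comm_cx C0 b L q =
           C0 * (\<Sum>i\<in>UNIV. q i * real (blk_dim b i))
              * (\<Prod>i\<in>UNIV. (1 / q i) powr (real (blk_dim b i) / real CARD('n)))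
              * det L powr (1 / real CARD('n))) \<and>
         (\<forall>c. 0 < c \<and> c \<le> 1 \<longrightarrow>
           comm_cx C0 b L (\<lambda>_. c) = C0 * real CARD('n) * det L powr (1 / real CARD('n))) \<and>
         (\<forall>q'. (\<forall>i. 0 < q' i \<and> q' i \<le> 1) \<longrightarrow>
           C0 * real CARD('n) * det L powr (1 / real CARD('n)) \<le> comm_cx C0 b L q')"
proof -
  have dL: "det L > 0"
    by (rule det_pos_if_pos_definite) (rule pos_definite_if_block_pd[OF L_diag L_pd])
  have d_sum: "(\<Sum>i\<in>UNIV. real (blk_dim b i)) = real CARD('n)"
    by (simp add: sum_blk_dim flip: of_nat_sum)
  have "comm_cx C0 b L (\<lambda>_. c) = C0 * real CARD('n) * det L powr (1 / real CARD('n))"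
    if "0 < c" "c \<le> 1" for c
    using comm_cx_eq[OF L_diag dL, of "\<lambda>_. c" C0] that d_sum
      weighted_sum_mul_prod_inverse_powr_const[where A = UNIV and d = "\<lambda>i. real (blk_dim b i)"]
    by (simp add: mult.assoc)
  moreover have "C0 * real CARD('n) * det L powr (1 / real CARD('n)) \<le> comm_cx C0 b L q'"
    if q': "\<forall>i. 0 < q' i \<and> q' i \<le> 1" for q'
  proof -
    have "real CARD('n) \<le> (\<Sum>i\<in>UNIV. q' i * real (blk_dim b i))
        * (\<Prod>i\<in>UNIV. (1 / q' i) powr (real (blk_dim b i) / real CARD('n)))"
      using weighted_sum_mul_prod_inverse_powr_ge
          [where A = UNIV and q = q' and d = "\<lambda>i. real (blk_dim b i)"] q' d_sum
      by simp
    then have "C0 * real CARD('n) \<le> C0 * (\<Sum>i\<in>UNIV. q' i * real (blk_dim b i))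
        * (\<Prod>i\<in>UNIV. (1 / q' i) powr (real (blk_dim b i) / real CARD('n)))"
      using C0_pos by (simp add: mult.assoc)
    then show ?thesis
      unfolding comm_cx_eq[OF L_diag dL q'[rule_format]] by (rule mult_right_mono) simp
  qed
  ultimately show ?thesis
    using comm_cx_eq[OF L_diag dL, of q, OF q_range] by blast
qed

end
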